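(* Let $R$ be a unital commutative Hausdorff topological ring whose group of units $R^\times$ is dense in $R$, and let $\lambda=\lambda^n$ with $n\in\mathbb N\cup\{\infty\}$. Then the group of units $\lambda^\times$ is dense in $\lambda$.
   Context: For $n\in\mathbb N$, $\lambda^n=R[\theta_1,\dots,\theta_n]$ is the Grassmann algebra over $R$ on odd generators $\theta_1,\dots,\theta_n$, i.e. $\lambda^n=\bigoplus_I R\theta_I$ over strictly increasing multi-indices $I$, with the product topology; $\lambda^\infty=R[\theta_i:i\in\mathbb N]=\bigcup_n\lambda^n$ with the direct limit topology with respect to the inclusions $\lambda^n\to\lambda^\infty$. *)

theory Defs
  imports "HOL-Analysis.Analysis" "HOL-Library.Extended_Nat"
begin

text \<open>An element sum_I r_I theta_I is represented by its coefficient function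
  nat set => R; the generators are theta_i with i < N (indices start at 0).\<close>

definition grass_carrier :: "enat \<Rightarrow> (nat set \<Rightarrow> 'a::zero) set" where
  "grass_carrier N = {f. finite {I. f I \<noteq> 0} \<and>
      (\<forall>I. f I \<noteq> 0 \<longrightarrow> finite I \<and> (\<forall>i\<in>I. enat i < N))}"

text \<open>Sign of theta_I theta_J = sign * theta_(I union J) for disjoint I, J.\<close>
definition grass_sign :: "nat set \<Rightarrow> nat set \<Rightarrow> 'a::comm_ring_1" where
  "grass_sign I J = (- 1) ^ card {(i, j). i \<in> I \<and> j \<in> J \<and> j < i}"

definition grass_mult :: "(nat set \<Rightarrow> 'a::comm_ring_1) \<Rightarrow> (nat set \<Rightarrow> 'a) \<Rightarrow> (nat set \<Rightarrow> 'a)" where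
  "grass_mult a b = (\<lambda>K. \<Sum>I\<in>Pow K. grass_sign I (K - I) * a I * b (K - I))"

definition grass_one :: "nat set \<Rightarrow> 'a::comm_ring_1" where
  "grass_one = (\<lambda>I. if I = {} then 1 else 0)"

definition grass_units :: "enat \<Rightarrow> (nat set \<Rightarrow> 'a::comm_ring_1) set" where
  "grass_units N = {x \<in> grass_carrier N. \<exists>y \<in> grass_carrier N.
      grass_mult x y = grass_one \<and> grass_mult y x = grass_one}"

definition grass_fin_top :: "nat \<Rightarrow> (nat set \<Rightarrow> 'a::{zero,topological_space}) topology" where
  "grass_fin_top n = subtopology (product_topology (\<lambda>_. euclidean) UNIV) (grass_carrier (enat n))"

text \<open>Topology on lambda^N: for finite N the product topology; for N = infinity
  the direct limit (final) topology w.r.t. the inclusions lambda^n -> lambda^infinity.\<close>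
definition grass_top :: "enat \<Rightarrow> (nat set \<Rightarrow> 'a::{zero,topological_space}) topology" where
  "grass_top N = (case N of enat n \<Rightarrow> grass_fin_top n
     | \<infinity> \<Rightarrow> topology (\<lambda>U. U \<subseteq> grass_carrier \<infinity> \<and>
                          (\<forall>n. openin (grass_fin_top n) (U \<inter> grass_carrier (enat n)))))"

end

theory Submission
  imports Defs
begin

text \<open>An element of \<open>\<lambda>\<^sup>N\<close> whose constant term \<open>x\<^sub>\<emptyset>\<close> is a unit of \<open>R\<close> is itself a unit: its
  inverse is obtained by solving \<open>(x y)\<^sub>K = 0\<close> for \<open>y\<^sub>K\<close> by recursion on \<open>card K\<close>, and it
  involves only the finitely many generators occurring in \<open>x\<close>.  Every \<open>x\<close> lies in some
  finite level \<open>\<lambda>\<^sup>m\<close>, whose topology is the product topology on coefficients; there,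
  replacing \<open>x\<^sub>\<emptyset>\<close> by a nearby unit of \<open>R\<close> (possible since \<open>R\<^sup>\<times>\<close> is dense) is a
  continuous perturbation, which stays inside any given neighbourhood of \<open>x\<close>.\<close>

lemma grass_sign_Un_left:
  assumes "finite I" "finite J" "finite M" "I \<inter> J = {}"
  shows "(grass_sign (I \<union> J) M :: 'a::comm_ring_1) = grass_sign I M * grass_sign J M"
proof -
  let ?A = "{(i, j). i \<in> I \<and> j \<in> M \<and> j < i}" and ?B = "{(i, j). i \<in> J \<and> j \<in> M \<and> j < i}"
  have "finite ?A" "finite ?B"
    using assms(1-3) by (auto intro: finite_subset[of _ "_ \<times> _"])
  moreover have "?A \<inter> ?B = {}"
    using assms(4) by auto
  ultimately have "card (?A \<union> ?B) = card ?A + card ?B"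
    by (rule card_Un_disjoint)
  moreover have "{(i, j). i \<in> I \<union> J \<and> j \<in> M \<and> j < i} = ?A \<union> ?B"
    by auto
  ultimately show ?thesis
    by (simp add: grass_sign_def power_add)
qed

lemma grass_sign_Un_right:
  assumes "finite I" "finite J" "finite M" "J \<inter> M = {}"
  shows "(grass_sign I (J \<union> M) :: 'a::comm_ring_1) = grass_sign I J * grass_sign I M"
proof -
  let ?A = "{(i, j). i \<in> I \<and> j \<in> J \<and> j < i}" and ?B = "{(i, j). i \<in> I \<and> j \<in> M \<and> j < i}"
  have "finite ?A" "finite ?B"
    using assms(1-3) by (auto intro: finite_subset[of _ "_ \<times> _"])
  moreover have "?A \<inter> ?B = {}"
    using assms(4) by auto
  ultimately have "card (?A \<union> ?B) = card ?A + card ?B"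
    by (rule card_Un_disjoint)
  moreover have "{(i, j). i \<in> I \<and> j \<in> J \<union> M \<and> j < i} = ?A \<union> ?B"
    by auto
  ultimately show ?thesis
    by (simp add: grass_sign_def power_add)
qed

lemma grass_sign_cocycle:
  assumes "finite I" "finite J" "finite M" "I \<inter> J = {}" "J \<inter> M = {}"
  shows "(grass_sign I J * grass_sign (I \<union> J) M :: 'a::comm_ring_1) =
    grass_sign I (J \<union> M) * grass_sign J M"
  using assms by (simp add: grass_sign_Un_left grass_sign_Un_right ac_simps)

lemma grass_sign_empty_left [simp]: "grass_sign {} J = 1"
  by (simp add: grass_sign_def)

lemma grass_sign_empty_right [simp]: "grass_sign I {} = 1"
  by (simp add: grass_sign_def)

lemma grass_carrier_infinite: "x \<in> grass_carrier N \<Longrightarrow> infinite K \<Longrightarrow> x K = 0"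
  by (auto simp: grass_carrier_def)

lemma grass_mult_infinite: "infinite K \<Longrightarrow> grass_mult a b K = 0"
  by (simp add: grass_mult_def)

lemma grass_one_mult:
  assumes "a \<in> grass_carrier N"
  shows "grass_mult grass_one a = a"
proof
  fix K
  show "grass_mult grass_one a K = a K"
  proof (cases "finite K")
    case True
    then have "grass_mult grass_one a K = (\<Sum>I\<in>{{}}. grass_sign I (K - I) * grass_one I * a (K - I))"
      unfolding grass_mult_def by (intro sum.mono_neutral_right) (auto simp: grass_one_def)
    then show ?thesis by (simp add: grass_one_def)
  qed (simp add: grass_mult_infinite grass_carrier_infinite[OF assms])
qed

lemma grass_mult_one:
  assumes "a \<in> grass_carrier N"
  shows "grass_mult a grass_one = a"
proof
  fix K
  show "grass_mult a grass_one K = a K"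
  proof (cases "finite K")
    case True
    then have "grass_mult a grass_one K = (\<Sum>I\<in>{K}. grass_sign I (K - I) * a I * grass_one (K - I))"
      unfolding grass_mult_def by (intro sum.mono_neutral_right) (auto simp: grass_one_def)
    then show ?thesis by (simp add: grass_one_def)
  qed (simp add: grass_mult_infinite grass_carrier_infinite[OF assms])
qed

text \<open>Both sides are sums over the pairs \<open>(I, J)\<close> of disjoint subsets of \<open>K\<close>, with signs
  matched by \<open>grass_sign_cocycle\<close> for the partition \<open>K = I \<union> J \<union> (K - I - J)\<close>.\<close>

lemma grass_mult_assoc:
  fixes a b c :: "nat set \<Rightarrow> 'a::comm_ring_1"
  shows "grass_mult (grass_mult a b) c = grass_mult a (grass_mult b c)"
proof
  fix K
  show "grass_mult (grass_mult a b) c K = grass_mult a (grass_mult b c) K"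
  proof (cases "finite K")
    case K: True
    define P where "P = Sigma (Pow K) (\<lambda>I. Pow (K - I))"
    define g where "g = (\<lambda>(I, J). grass_sign I (K - I) * grass_sign J (K - I - J) * a I * b J * c (K - I - J))"
    have "grass_mult (grass_mult a b) c K =
        (\<Sum>L\<in>Pow K. \<Sum>I\<in>Pow L. grass_sign L (K - L) * grass_sign I (L - I) * a I * b (L - I) * c (K - L))"
      by (simp add: grass_mult_def sum_distrib_left sum_distrib_right mult.assoc)
    also have "\<dots> = (\<Sum>(L, I)\<in>Sigma (Pow K) Pow.
        grass_sign L (K - L) * grass_sign I (L - I) * a I * b (L - I) * c (K - L))"
      by (rule sum.Sigma) (use K in \<open>auto intro: finite_subset\<close>)
    also have "\<dots> = sum g P"
    proof (rule sum.reindex_bij_witness[where i="\<lambda>(I, J). (I \<union> J, I)" and j="\<lambda>(L, I). (I, L - I)"])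
      fix x
      assume "x \<in> Sigma (Pow K) Pow"
      then obtain L I where x: "x = (L, I)" "L \<subseteq> K" "I \<subseteq> L"
        by auto
      have "finite I" "finite (L - I)" "finite (K - L)"
        using x K by (auto intro: finite_subset)
      then have "grass_sign I (L - I) * grass_sign (I \<union> (L - I)) (K - L) =
          (grass_sign I (L - I \<union> (K - L)) * grass_sign (L - I) (K - L) :: 'a)"
        by (rule grass_sign_cocycle) auto
      moreover have "I \<union> (L - I) = L" "L - I \<union> (K - L) = K - I"
        using x by auto
      ultimately have sign: "grass_sign I (L - I) * grass_sign L (K - L) =
          (grass_sign I (K - I) * grass_sign (L - I) (K - L) :: 'a)"
        by simp
      have "K - I - (L - I) = K - L"
        using x by auto
      with x sign show "g (case x of (L, I) \<Rightarrow> (I, L - I)) = (case x of (L, I) \<Rightarrow>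
          grass_sign L (K - L) * grass_sign I (L - I) * a I * b (L - I) * c (K - L))"
        by (simp add: g_def ac_simps)
    qed (auto simp: P_def)
    also have "\<dots> = (\<Sum>I\<in>Pow K. \<Sum>J\<in>Pow (K - I).
        grass_sign I (K - I) * grass_sign J (K - I - J) * a I * b J * c (K - I - J))"
      unfolding P_def g_def by (rule sum.Sigma[symmetric]) (use K in auto)
    also have "\<dots> = grass_mult a (grass_mult b c) K"
      by (simp add: grass_mult_def sum_distrib_left sum_distrib_right mult.assoc mult.left_commute)
    finally show ?thesis .
  qed (simp add: grass_mult_infinite)
qed

text \<open>With \<open>v = x\<^sub>\<emptyset>\<inverse>\<close>, \<open>grass_rinv v x\<close> is a right inverse of \<open>x\<close>: its coefficients are
  determined by \<open>(x y)\<^sub>K = 0\<close> for \<open>K \<noteq> \<emptyset>\<close>, as \<open>x\<^sub>\<emptyset> y\<^sub>K\<close> is the only summand involving \<open>y\<^sub>K\<close>.\<close>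

function grass_rinv :: "'a::comm_ring_1 \<Rightarrow> (nat set \<Rightarrow> 'a) \<Rightarrow> nat set \<Rightarrow> 'a" where
  "grass_rinv v x K = (if finite K \<and> K \<noteq> {} then
      - v * (\<Sum>I\<in>Pow K - {{}}. grass_sign I (K - I) * x I * grass_rinv v x (K - I))
     else if K = {} then v else 0)"
  by pat_completeness auto
termination
  by (relation "Wellfounded.measure (\<lambda>(v, x, K). card K)") (auto intro!: psubset_card_mono)

declare grass_rinv.simps [simp del]

lemma grass_rinv_empty: "grass_rinv v x {} = v"
  by (subst grass_rinv.simps) simp

lemma grass_rinv_infinite: "infinite K \<Longrightarrow> grass_rinv v x K = 0"
  by (subst grass_rinv.simps) auto

lemma grass_rinv_nonempty:
  "finite K \<Longrightarrow> K \<noteq> {} \<Longrightarrow>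
    grass_rinv v x K = - v * (\<Sum>I\<in>Pow K - {{}}. grass_sign I (K - I) * x I * grass_rinv v x (K - I))"
  by (subst grass_rinv.simps) simp

lemma grass_mult_rinv:
  assumes "x {} * v = 1"
  shows "grass_mult x (grass_rinv v x) = grass_one"
proof
  fix K
  show "grass_mult x (grass_rinv v x) K = grass_one K"
  proof (cases "finite K \<and> K \<noteq> {}")
    case True
    define S where "S = (\<Sum>I\<in>Pow K - {{}}. grass_sign I (K - I) * x I * grass_rinv v x (K - I))"
    have rinv: "grass_rinv v x K = - v * S"
      unfolding S_def using True by (intro grass_rinv_nonempty) auto
    have "grass_mult x (grass_rinv v x) K =
        grass_sign {} (K - {}) * x {} * grass_rinv v x (K - {}) + S"
      unfolding grass_mult_def S_def using True by (subst sum.remove[of _ "{}"]) auto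
    also have "\<dots> = - (x {} * v) * S + S"
      by (simp add: rinv)
    also have "\<dots> = 0"
      using assms by simp
    finally show ?thesis
      using True by (simp add: grass_one_def)
  next
    case False
    then consider "K = {}" | "infinite K"
      by blast
    then show ?thesis
    proof cases
      case 1
      then show ?thesis
        using assms by (simp add: grass_mult_def grass_one_def grass_rinv_empty)
    qed (auto simp: grass_mult_infinite grass_one_def)
  qed
qed

lemma grass_rinv_support:
  "grass_rinv v x K \<noteq> 0 \<Longrightarrow> K \<subseteq> \<Union>{I. x I \<noteq> 0}"
proof (induction K rule: measure_induct_rule[where f = card])
  case (less K)
  show ?case
  proof (cases "finite K \<and> K \<noteq> {}")
    case True
    define S where "S = (\<Sum>I\<in>Pow K - {{}}. grass_sign I (K - I) * x I * grass_rinv v x (K - I))"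
    have "grass_rinv v x K = - v * S"
      unfolding S_def using True by (intro grass_rinv_nonempty) auto
    then have "S \<noteq> 0"
      using less.prems by auto
    then obtain I where I: "I \<in> Pow K - {{}}" "grass_sign I (K - I) * x I * grass_rinv v x (K - I) \<noteq> 0"
      unfolding S_def using sum.not_neutral_contains_not_neutral by blast
    then have "card (K - I) < card K"
      using True by (auto intro!: psubset_card_mono)
    then have "K - I \<subseteq> \<Union>{I. x I \<noteq> 0}"
      by (rule less.IH) (use I(2) in auto)
    moreover have "x I \<noteq> 0"
      using I(2) by auto
    then have "I \<subseteq> \<Union>{I. x I \<noteq> 0}"
      by blast
    ultimately show ?thesis
      by blast
  qed (use less.prems grass_rinv_infinite in blast)
qed

lemma grass_rinv_carrier:
  assumes x: "x \<in> grass_carrier N"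
  shows "grass_rinv v x \<in> grass_carrier N"
proof -
  let ?S = "\<Union>{I. x I \<noteq> 0}"
  have S: "finite ?S" "\<forall>i\<in>?S. enat i < N"
    using x by (auto simp: grass_carrier_def)
  have support: "{K. grass_rinv v x K \<noteq> 0} \<subseteq> Pow ?S"
    using grass_rinv_support by blast
  then have "finite {K. grass_rinv v x K \<noteq> 0}"
    using S(1) by (rule finite_subset[OF _ finite_Pow_iff[THEN iffD2]])
  with support S show ?thesis
    unfolding grass_carrier_def by (blast intro: finite_subset)
qed

text \<open>If \<open>x y = 1\<close> and \<open>y w = 1\<close>, associativity gives \<open>w = x\<close>; the right inverse \<open>w\<close>
  of \<open>y\<close> exists because \<open>y\<^sub>\<emptyset> = x\<^sub>\<emptyset>\<inverse>\<close> is again a unit.\<close>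

lemma grass_unitsI:
  assumes x: "x \<in> grass_carrier N" and unit: "x {} * v = 1"
  shows "x \<in> grass_units N"
proof -
  define y where "y = grass_rinv v x"
  define w where "w = grass_rinv (x {}) y"
  have xy: "grass_mult x y = grass_one"
    unfolding y_def using unit by (rule grass_mult_rinv)
  have y: "y \<in> grass_carrier N"
    unfolding y_def using x by (rule grass_rinv_carrier)
  have yw: "grass_mult y w = grass_one"
    unfolding w_def using unit by (intro grass_mult_rinv) (simp add: y_def grass_rinv_empty mult.commute)
  have w: "w \<in> grass_carrier N"
    unfolding w_def using y by (rule grass_rinv_carrier)
  have "w = grass_mult (grass_mult x y) w"
    unfolding xy using w by (rule grass_one_mult[symmetric])
  also have "\<dots> = x"
    by (simp add: grass_mult_assoc yw grass_mult_one[OF x])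
  finally have "grass_mult y x = grass_one"
    using yw by simp
  with x y xy show ?thesis
    unfolding grass_units_def by blast
qed

lemma istopology_coherent:
  "istopology (\<lambda>U. U \<subseteq> S \<and> (\<forall>i. openin (X i) (U \<inter> C i)))"
proof (unfold istopology_def, rule conjI; intro allI impI)
  fix U V
  assume U: "U \<subseteq> S \<and> (\<forall>i. openin (X i) (U \<inter> C i))"
    and V: "V \<subseteq> S \<and> (\<forall>i. openin (X i) (V \<inter> C i))"
  have "openin (X i) ((U \<inter> C i) \<inter> (V \<inter> C i))" for i
    using U V by (simp add: openin_Int)
  moreover have "(U \<inter> C i) \<inter> (V \<inter> C i) = U \<inter> V \<inter> C i" for i
    by blast
  ultimately show "U \<inter> V \<subseteq> S \<and> (\<forall>i. openin (X i) (U \<inter> V \<inter> C i))"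
    using U by auto
next
  fix \<U>
  assume \<U>: "\<forall>U\<in>\<U>. U \<subseteq> S \<and> (\<forall>i. openin (X i) (U \<inter> C i))"
  then have "openin (X i) (\<Union>U\<in>\<U>. U \<inter> C i)" for i
    by blast
  moreover have "(\<Union>U\<in>\<U>. U \<inter> C i) = \<Union>\<U> \<inter> C i" for i
    by blast
  ultimately show "\<Union>\<U> \<subseteq> S \<and> (\<forall>i. openin (X i) (\<Union>\<U> \<inter> C i))"
    using \<U> by auto
qed

lemma openin_grass_top_infinity:
  "openin (grass_top \<infinity>) U \<longleftrightarrow>
    U \<subseteq> grass_carrier \<infinity> \<and> (\<forall>n. openin (grass_fin_top n) (U \<inter> grass_carrier (enat n)))"
  unfolding grass_top_def by (simp add: istopology_coherent)

lemma topspace_grass_fin_top: "topspace (grass_fin_top n) = grass_carrier (enat n)"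
  by (simp add: grass_fin_top_def)

lemma grass_carrier_mono: "M \<le> N \<Longrightarrow> grass_carrier M \<subseteq> grass_carrier N"
  by (auto simp: grass_carrier_def dest: order.strict_trans2)

lemma topspace_grass_top:
  "topspace (grass_top N) = (grass_carrier N :: (nat set \<Rightarrow> 'a::{zero, topological_space}) set)"
proof (cases N)
  case infinity
  have "grass_carrier \<infinity> \<inter> grass_carrier (enat n) = (topspace (grass_fin_top n) :: (nat set \<Rightarrow> 'a) set)" for n
    using grass_carrier_mono[of "enat n" \<infinity>] by (auto simp: topspace_grass_fin_top)
  then have "openin (grass_top \<infinity>) (grass_carrier \<infinity> :: (nat set \<Rightarrow> 'a) set)"
    by (simp add: openin_grass_top_infinity openin_topspace)
  then have "grass_carrier \<infinity> \<subseteq> (topspace (grass_top \<infinity>) :: (nat set \<Rightarrow> 'a) set)"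
    by (rule openin_subset)
  moreover have "topspace (grass_top \<infinity>) \<subseteq> (grass_carrier \<infinity> :: (nat set \<Rightarrow> 'a) set)"
    by (meson openin_grass_top_infinity openin_topspace)
  ultimately show ?thesis
    using infinity by blast
qed (simp add: grass_top_def topspace_grass_fin_top)

lemma grass_carrier_finite_level:
  assumes x: "x \<in> grass_carrier N"
  obtains m where "x \<in> grass_carrier (enat m)"
proof
  let ?S = "\<Union>{I. x I \<noteq> 0}"
  have "finite ?S"
    using x by (auto simp: grass_carrier_def)
  then have "\<forall>i\<in>?S. i < Suc (Max (insert 0 ?S))"
    by (simp add: le_imp_less_Suc)
  then show "x \<in> grass_carrier (enat (Suc (Max (insert 0 ?S))))"
    using x by (auto simp: grass_carrier_def)
qed

lemma openin_grass_top_level: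
  assumes T: "openin (grass_top N) T" and x: "x \<in> T"
  obtains m where "x \<in> grass_carrier (enat m)"
    and "openin (grass_fin_top m) (T \<inter> grass_carrier (enat m))"
proof (cases N)
  case (enat n)
  then have "openin (grass_fin_top n) T"
    using T by (simp add: grass_top_def)
  moreover have "T \<subseteq> grass_carrier (enat n)"
    using openin_subset[OF T] enat by (simp add: topspace_grass_top)
  ultimately show ?thesis
    using x by (intro that) (auto simp: Int_absorb2)
next
  case infinity
  have "x \<in> grass_carrier N"
    using openin_subset[OF T] x by (auto simp: topspace_grass_top)
  then obtain m where "x \<in> grass_carrier (enat m)"
    by (rule grass_carrier_finite_level)
  moreover have "openin (grass_fin_top m) (T \<inter> grass_carrier (enat m))"
    using T infinity by (simp add: openin_grass_top_infinity)
  ultimately show ?thesis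
    by (rule that)
qed

lemma grass_carrier_fun_upd_empty:
  assumes "x \<in> grass_carrier N"
  shows "x({} := u) \<in> grass_carrier N"
proof -
  have "{I. (x({} := u)) I \<noteq> 0} \<subseteq> insert {} {I. x I \<noteq> 0}"
    by auto
  moreover have "finite {I. x I \<noteq> 0}"
    using assms by (simp add: grass_carrier_def)
  ultimately have "finite {I. (x({} := u)) I \<noteq> 0}"
    by (meson finite_insert finite_subset)
  then show ?thesis
    using assms by (simp add: grass_carrier_def)
qed

lemma continuous_map_fun_upd_product_topology:
  "continuous_map euclidean (product_topology (\<lambda>_. euclidean) UNIV) (\<lambda>u. x(k := u))"
  unfolding continuous_map_componentwise_UNIV
proof
  fix j
  show "continuous_map euclidean euclidean (\<lambda>u. (x(k := u)) j)"
    using continuous_map_id by (cases "j = k") (simp_all add: id_def)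
qed

lemma grass_fin_top_perturb_constant_term:
  fixes x :: "nat set \<Rightarrow> 'a::{comm_ring_1, topological_space}"
  assumes dense: "closure {u :: 'a. \<exists>v. u * v = 1} = UNIV"
    and T: "openin (grass_fin_top n) T" and x: "x \<in> T"
  obtains u v where "u * v = 1" "x({} := u) \<in> T"
proof -
  obtain U where U: "openin (product_topology (\<lambda>_. euclidean) UNIV) U"
    and T_eq: "T = U \<inter> grass_carrier (enat n)"
    using T unfolding grass_fin_top_def openin_subtopology by blast
  have "open {u. x({} := u) \<in> U}"
    using openin_continuous_map_preimage[OF continuous_map_fun_upd_product_topology U] by simp
  moreover have "x {} \<in> {u. x({} := u) \<in> U}"
    using x T_eq by simp
  ultimately have "{u. x({} := u) \<in> U} \<inter> {u :: 'a. \<exists>v. u * v = 1} \<noteq> {}"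
    using dense open_Int_closure_eq_empty by blast
  then obtain u v where "x({} := u) \<in> U" "u * v = 1"
    by blast
  moreover have "x({} := u) \<in> grass_carrier (enat n)"
    using x T_eq grass_carrier_fun_upd_empty by blast
  ultimately show ?thesis
    using that T_eq by blast
qed

theorem lemma2p2:
  fixes N :: enat
  assumes "closure {x :: 'a :: {comm_ring_1, topological_ab_group_add,
                                  topological_semigroup_mult, t2_space}. \<exists>y. x * y = 1} = UNIV"
  shows "(grass_top N) closure_of (grass_units N :: (nat set \<Rightarrow> 'a) set) = grass_carrier N"
proof -
  have "x \<in> grass_top N closure_of grass_units N" if x: "x \<in> grass_carrier N" for x :: "nat set \<Rightarrow> 'a"
  proof -
    have "\<exists>y\<in>grass_units N. y \<in> T" if T: "openin (grass_top N) T" "x \<in> T" for T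
    proof -
      obtain m where "x \<in> grass_carrier (enat m)"
        and "openin (grass_fin_top m) (T \<inter> grass_carrier (enat m))"
        using T by (rule openin_grass_top_level)
      then obtain u v where "u * v = 1" "x({} := u) \<in> T"
        using grass_fin_top_perturb_constant_term[OF assms] T(2) by blast
      moreover have "x({} := u) \<in> grass_units N"
        by (rule grass_unitsI[where v = v]) (simp_all add: grass_carrier_fun_upd_empty x \<open>u * v = 1\<close>)
      ultimately show ?thesis
        by blast
    qed
    then show ?thesis
      using x by (auto simp: in_closure_of topspace_grass_top)
  qed
  then show ?thesis
    using closure_of_subset_topspace[of "grass_top N" "grass_units N :: (nat set \<Rightarrow> 'a) set"]
    by (auto simp: topspace_grass_top)
qed

end
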